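(* Let $R$ be a $*$-ring with unity and $a,b\in R$. The following are equivalent: (i) $a$ and $b$ are generalized comparable; (ii) there exist decompositions $a=x+y$ and $b=z+w$ with $x\perp y$, $z\perp w$, $x\sim z$, and $y,w$ very orthogonal.
   Context: Natural partial order: $a\leq b$ iff there is $x\in R$ with $a=xa=xb=ax^*=bx^*$. Orthogonality: $a\perp b$ iff there is $x\in R$ with $xa=a=ax^*$, $xb=0=bx^*$. Equivalence: $a\sim b$ iff there exist $x,y\in R$ with $aa^*=xx^*$, $bb^*=yy^*$, $a^*a=y^*y$, $b^*b=x^*x$, $x=ax=xb$, $y=by=ya$. Dominance: $a\lesssim b$ iff $a\sim c\leq b$ for some $c$. $a,b$ are generalized comparable if there is a central projection $h$ ($h=h^2=h^*$ central) with $ha\lesssim hb$ and $(1-h)b\lesssim(1-h)a$. $y,w$ are very orthogonal if there is a central projection $h$ with $hy=y$ and $hw=0$ (or with the roles interchanged as needed; the paper's definition: $ha=a$, $hb=0$ for the pair $(a,b)$, and in (ii) $y,w$ very orthogonal is used with $hw=w$, $hy=0$). *)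

theory Defs
  imports Main
begin

class star_ring = ring_1 +
  fixes star :: "'a \<Rightarrow> 'a"
  assumes star_add: "star (x + y) = star x + star y"
      and star_mult: "star (x * y) = star y * star x"
      and star_star: "star (star x) = x"

definition npo :: "'a::star_ring \<Rightarrow> 'a \<Rightarrow> bool" where
  "npo a b \<longleftrightarrow> (\<exists>x. a = x * a \<and> x * a = x * b \<and> x * b = a * star x \<and> a * star x = b * star x)"

definition orth :: "'a::star_ring \<Rightarrow> 'a \<Rightarrow> bool" where
  "orth a b \<longleftrightarrow> (\<exists>x. x * a = a \<and> a = a * star x \<and> x * b = 0 \<and> b * star x = 0)"

definition sequiv :: "'a::star_ring \<Rightarrow> 'a \<Rightarrow> bool" where
  "sequiv a b \<longleftrightarrow> (\<exists>x y. a * star a = x * star x \<and> b * star b = y * star y \<and>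
      star a * a = star y * y \<and> star b * b = star x * x \<and>
      x = a * x \<and> a * x = x * b \<and> y = b * y \<and> b * y = y * a)"

definition dominated :: "'a::star_ring \<Rightarrow> 'a \<Rightarrow> bool" where
  "dominated a b \<longleftrightarrow> (\<exists>c. sequiv a c \<and> npo c b)"

definition central_proj :: "'a::star_ring \<Rightarrow> bool" where
  "central_proj h \<longleftrightarrow> h = h * h \<and> h = star h \<and> (\<forall>r. h * r = r * h)"

definition gen_comparable :: "'a::star_ring \<Rightarrow> 'a \<Rightarrow> bool" where
  "gen_comparable a b \<longleftrightarrow> (\<exists>h. central_proj h \<and> dominated (h * a) (h * b)
      \<and> dominated ((1 - h) * b) ((1 - h) * a))"

definition very_orth :: "'a::star_ring \<Rightarrow> 'a \<Rightarrow> bool" where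
  "very_orth a b \<longleftrightarrow> (\<exists>h. central_proj h \<and> h * a = a \<and> h * b = 0)"

end

theory Submission
  imports Defs
begin

text \<open>
  A central projection h splits R as the product h R \<times> (1 - h) R: products and adjoints of
  elements h u1 + (1 - h) u2 are computed componentwise, so orthogonality and equivalence
  can be glued from the two components. Moreover c \<le> b holds exactly when c \<perp> b - c.
  Hence, if h a \<sim> c \<le> h b and (1 - h) b \<sim> d \<le> (1 - h) a, the decompositions
  a = (h a + d) + ((1 - h) a - d) and b = ((1 - h) b + c) + (h b - c) have the required
  properties, the remainders being separated by h. Conversely, a central projection separating
  w from y restricts x + y and z + w to h z \<le> h z + w and (1 - h) x \<le> (1 - h) x + y.
\<close>

lemma star_zero [simp]: "star (0::'a::star_ring) = 0"
  by (metis add_cancel_right_right star_add)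

lemma star_one [simp]: "star (1::'a::star_ring) = 1"
  by (metis mult_1_left mult_1_right star_mult star_star)

lemma star_diff: "star ((x::'a::star_ring) - y) = star x - star y"
  by (metis add_diff_cancel diff_add_cancel star_add)

lemma central_projD:
  assumes "central_proj (h::'a::star_ring)"
  shows "h * h = h" "star h = h" "h * r = r * h"
  using assms unfolding central_proj_def by metis+

lemma central_proj_complement:
  assumes "central_proj (h::'a::star_ring)"
  shows "central_proj (1 - h)"
  unfolding central_proj_def
proof (intro conjI allI)
  note h = central_projD[OF assms]
  show "1 - h = (1 - h) * (1 - h)" by (simp add: algebra_simps h(1))
  show "1 - h = star (1 - h)" by (simp add: star_diff h(2))
  show "(1 - h) * r = r * (1 - h)" for r by (simp add: algebra_simps h(3)[of r])
qed

lemma central_proj_mult_simps: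
  assumes "central_proj (h::'a::star_ring)"
  shows "h * (h * a) = h * a" "(1 - h) * ((1 - h) * a) = (1 - h) * a"
    "h * ((1 - h) * a) = 0" "(1 - h) * (h * a) = 0"
  using central_projD(1)[OF assms] by (simp_all add: algebra_simps flip: mult.assoc)

lemma central_proj_mult_left_commute:
  assumes "central_proj (h::'a::star_ring)"
  shows "u * (h * v) = h * (u * v)"
  by (metis central_projD(3)[OF assms] mult.assoc)

lemma central_proj_block_mult:
  assumes "central_proj (h::'a::star_ring)"
  shows "(h * u1 + (1 - h) * u2) * (h * v1 + (1 - h) * v2) = h * (u1 * v1) + (1 - h) * (u2 * v2)"
proof -
  note simps = central_proj_mult_simps[OF assms] mult.assoc
  note comm = central_proj_mult_left_commute[OF assms, of u1] central_proj_mult_left_commute[OF assms, of u2]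
    central_proj_mult_left_commute[OF central_proj_complement[OF assms], of u1]
    central_proj_mult_left_commute[OF central_proj_complement[OF assms], of u2]
  show ?thesis by (simp add: distrib_left distrib_right comm simps)
qed

lemma central_proj_block_star:
  assumes "central_proj (h::'a::star_ring)"
  shows "star (h * u1 + (1 - h) * u2) = h * star u1 + (1 - h) * star u2"
proof -
  have "star (k * u) = k * star u" if "central_proj k" for k u :: 'a
    using central_projD(2)[OF that] central_projD(3)[OF that, of "star u"] by (simp add: star_mult)
  then show ?thesis
    using central_proj_complement[OF assms] assms by (simp add: star_add)
qed

lemma sequiv_sym: "sequiv (a::'a::star_ring) b \<Longrightarrow> sequiv b a"
  unfolding sequiv_def by metis

lemma sequiv_zero: "sequiv (0::'a::star_ring) 0"
  unfolding sequiv_def by simp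

lemma orth_zero_right: "orth (a::'a::star_ring) 0"
  unfolding orth_def by (rule exI[of _ 1]) simp

lemma npo_iff_orth_diff: "npo (c::'a::star_ring) b \<longleftrightarrow> orth c (b - c)"
  unfolding npo_def orth_def
  by (metis diff_self left_diff_distrib right_diff_distrib eq_iff_diff_eq_0)

lemma npo_mult_left_eq_zero:
  assumes "npo (c::'a::star_ring) b" and "k * b = 0"
  shows "k * c = 0"
proof -
  obtain x where "c = b * star x" using assms(1) unfolding npo_def by metis
  then show ?thesis using assms(2) by (simp add: mult.assoc[symmetric])
qed

lemma sequiv_central_proj_glue:
  assumes h: "central_proj (h::'a::star_ring)" and "sequiv a1 c1" and "sequiv a2 c2"
  shows "sequiv (h * a1 + (1 - h) * a2) (h * c1 + (1 - h) * c2)"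
proof -
  obtain p1 q1 where
    "a1 * star a1 = p1 * star p1" "c1 * star c1 = q1 * star q1"
    "star a1 * a1 = star q1 * q1" "star c1 * c1 = star p1 * p1"
    "a1 * p1 = p1" "p1 * c1 = p1" "c1 * q1 = q1" "q1 * a1 = q1"
    using assms(2) unfolding sequiv_def by metis
  moreover obtain p2 q2 where
    "a2 * star a2 = p2 * star p2" "c2 * star c2 = q2 * star q2"
    "star a2 * a2 = star q2 * q2" "star c2 * c2 = star p2 * p2"
    "a2 * p2 = p2" "p2 * c2 = p2" "c2 * q2 = q2" "q2 * a2 = q2"
    using assms(3) unfolding sequiv_def by metis
  ultimately show ?thesis
    unfolding sequiv_def
    by (intro exI[of _ "h * p1 + (1 - h) * p2"] exI[of _ "h * q1 + (1 - h) * q2"])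
      (simp add: central_proj_block_mult[OF h] central_proj_block_star[OF h])
qed

lemma orth_central_proj_glue:
  assumes h: "central_proj (h::'a::star_ring)" and "orth x1 y1" and "orth x2 y2"
  shows "orth (h * x1 + (1 - h) * x2) (h * y1 + (1 - h) * y2)"
proof -
  obtain u1 where "u1 * x1 = x1" "x1 * star u1 = x1" "u1 * y1 = 0" "y1 * star u1 = 0"
    using assms(2) unfolding orth_def by metis
  moreover obtain u2 where "u2 * x2 = x2" "x2 * star u2 = x2" "u2 * y2 = 0" "y2 * star u2 = 0"
    using assms(3) unfolding orth_def by metis
  ultimately show ?thesis
    unfolding orth_def
    by (intro exI[of _ "h * u1 + (1 - h) * u2"])
      (simp add: central_proj_block_mult[OF h] central_proj_block_star[OF h])
qed

lemma dominated_if_sequiv_orth: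
  assumes "sequiv (a::'a::star_ring) c" and "orth c e"
  shows "dominated a (c + e)"
  using assms unfolding dominated_def npo_iff_orth_diff by auto

lemma gen_comparable_imp_decomposition:
  fixes a b :: "'a::star_ring"
  assumes "gen_comparable a b"
  shows "\<exists>x y z w. a = x + y \<and> b = z + w \<and> orth x y \<and> orth z w \<and> sequiv x z
    \<and> very_orth w y"
proof -
  obtain h c d where h: "central_proj h"
    and ac: "sequiv (h * a) c" "npo c (h * b)"
    and bd: "sequiv ((1 - h) * b) d" "npo d ((1 - h) * a)"
    using assms unfolding gen_comparable_def dominated_def by blast
  note simps = central_proj_mult_simps[OF h]
  have "h * d = 0"
    using npo_mult_left_eq_zero[OF bd(2)] simps(3) by blast
  then have d: "(1 - h) * d = d" by (simp add: left_diff_distrib)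
  have "(1 - h) * c = 0"
    using npo_mult_left_eq_zero[OF ac(2)] simps(4) by blast
  then have c: "h * c = c" by (simp add: left_diff_distrib)
  have "orth (h * (h * a) + (1 - h) * d) (h * 0 + (1 - h) * ((1 - h) * a - d))"
    using orth_central_proj_glue[OF h orth_zero_right] bd(2) by (simp add: npo_iff_orth_diff)
  then have xy: "orth (h * a + d) ((1 - h) * a - d)"
    by (simp add: simps d right_diff_distrib)
  have "orth ((1 - h) * ((1 - h) * b) + (1 - (1 - h)) * c) ((1 - h) * 0 + (1 - (1 - h)) * (h * b - c))"
    using orth_central_proj_glue[OF central_proj_complement[OF h] orth_zero_right] ac(2)
    by (simp add: npo_iff_orth_diff)
  then have zw: "orth ((1 - h) * b + c) (h * b - c)"
    by (simp add: simps c right_diff_distrib)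
  have "sequiv (h * (h * a) + (1 - h) * d) (h * c + (1 - h) * ((1 - h) * b))"
    by (rule sequiv_central_proj_glue[OF h ac(1) sequiv_sym[OF bd(1)]])
  then have xz: "sequiv (h * a + d) ((1 - h) * b + c)"
    by (simp add: simps c d add.commute)
  have wy: "very_orth (h * b - c) ((1 - h) * a - d)"
    unfolding very_orth_def
    by (intro exI[of _ h]) (simp add: h simps c \<open>h * d = 0\<close> right_diff_distrib)
  have "a = (h * a + d) + ((1 - h) * a - d)" "b = ((1 - h) * b + c) + (h * b - c)"
    by (simp_all add: algebra_simps)
  with xy zw xz wy show ?thesis by blast
qed

lemma decomposition_imp_gen_comparable:
  fixes a b x y z w :: "'a::star_ring"
  assumes "a = x + y" "b = z + w" "orth x y" "orth z w" "sequiv x z" "very_orth w y"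
  shows "gen_comparable a b"
proof -
  obtain h where h: "central_proj h" and hw: "h * w = w" and hy: "h * y = 0"
    using assms(6) unfolding very_orth_def by blast
  have "sequiv (h * x + (1 - h) * 0) (h * z + (1 - h) * 0)"
    and "orth (h * z + (1 - h) * 0) (h * w + (1 - h) * 0)"
    using sequiv_central_proj_glue[OF h assms(5) sequiv_zero]
      orth_central_proj_glue[OF h assms(4) orth_zero_right] by blast+
  then have "dominated (h * a) (h * b)"
    using dominated_if_sequiv_orth assms(1,2) hw hy by (simp add: distrib_left)
  have "sequiv (h * 0 + (1 - h) * z) (h * 0 + (1 - h) * x)"
    and "orth (h * 0 + (1 - h) * x) (h * 0 + (1 - h) * y)"
    using sequiv_central_proj_glue[OF h sequiv_zero sequiv_sym[OF assms(5)]]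
      orth_central_proj_glue[OF h orth_zero_right assms(3)] by blast+
  then have "dominated ((1 - h) * b) ((1 - h) * a)"
    using dominated_if_sequiv_orth assms(1,2) hw hy by (simp add: distrib_left left_diff_distrib)
  with h \<open>dominated (h * a) (h * b)\<close> show ?thesis
    unfolding gen_comparable_def by blast
qed

theorem mainTheorem11:
  fixes a b :: "'a::star_ring"
  shows "gen_comparable a b \<longleftrightarrow>
    (\<exists>x y z w. a = x + y \<and> b = z + w \<and> orth x y \<and> orth z w \<and> sequiv x z
       \<and> very_orth w y)"
  using gen_comparable_imp_decomposition decomposition_imp_gen_comparable by blast

end
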